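(* Let $\mu$ be a function on Borel subsets of $\mathbf{S}^n$ such that (i) $\mu$ is nonnegative and countably additive; (ii) $\mu(\mathbf{S}^n)=\sigma(\mathbf{S}^n)$; (iii) $\mu(\mathbf{S}^n\setminus\omega)>\sigma(\omega^* )$ for every spherically convex subset $\omega\subset\mathbf{S}^n$, $\omega\neq\mathbf{S}^n$. Then the pair $(\tilde h,\tilde\rho)\in\mathcal{A}$ minimizing $\mathcal{Q}$ over $\mathcal{A}$ (consisting of the support and radial functions of a closed convex hypersurface in $\mathcal{F}^n$) is unique up to rescaling: if $(h_1,\rho_1)$ and $(h_2,\rho_2)$ are two such minimizing pairs, then $(h_2,\rho_2)=(ch_1,c\rho_1)$ for some constant $c>0$.
   Context: $\mathbf{S}^n$ is the unit sphere in $\mathbb{R}^{n+1}$, $n\ge1$, centered at the origin $\mathcal{O}$; $\sigma$ is the standard Lebesgue measure on $\mathbf{S}^n$; $\omega^*=\{y\in\mathbf{S}^n:\langle x,y\rangle\le0\ \forall x\in\omega\}$. $\mathcal{F}^n$ is the set of boundaries of compact convex sets in $\mathbb{R}^{n+1}$ containing $\mathcal{O}$ in their interior; for $F\in\mathcal{F}^n$, its radial function $\rho(x)$ is the distance from $\mathcal{O}$ to the point where the ray in direction $x\in\mathbf{S}^n$ meets $F$, and its support function is $h(N)=\sup_{x}\rho(x)\langle x,N\rangle$. $\mathcal{A}=\{(h,\rho)\in C(\mathbf{S}^n)\times C(\mathbf{S}^n): h>0,\rho>0,\ \log h(N)-\log\rho(x)\ge\log\langle x,N\rangle$ whenever $\langle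 x,N\rangle>0\}$ and $\mathcal{Q}[h,\rho]=\int_{\mathbf{S}^n}\log h\,d\sigma-\int_{\mathbf{S}^n}\log\rho\,d\mu$. *)

theory Defs
  imports "HOL-Analysis.Analysis"
begin

text \<open>Ambient space R^(n+1) is a euclidean_space type 'a; S^n = sphere 0 1.\<close>

text \<open>Standard (Lebesgue) surface measure sigma on the unit sphere, defined via the cone
  construction: sigma(A) = (n+1) * vol{t x : 0 < t <= 1, x in A}, on Borel subsets of S^n.\<close>
definition sphere_measure :: "'a::euclidean_space measure" where
  "sphere_measure = measure_of (sphere 0 1) (sets (restrict_space borel (sphere (0::'a) 1)))
     (\<lambda>A. of_nat DIM('a) * emeasure lborel {t *\<^sub>R x | t x. t \<in> {0<..1} \<and> x \<in> A})"

definition polar_sph :: "'a::euclidean_space set \<Rightarrow> 'a set" where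
  "polar_sph \<omega> = {y \<in> sphere 0 1. \<forall>x\<in>\<omega>. inner x y \<le> 0}"

definition sph_convex :: "'a::euclidean_space set \<Rightarrow> bool" where
  "sph_convex \<omega> \<longleftrightarrow> \<omega> \<subseteq> sphere 0 1 \<and> convex {t *\<^sub>R x | t x. 0 \<le> t \<and> x \<in> \<omega>}"

definition hypersurfaces :: "'a::euclidean_space set set" where
  "hypersurfaces = {frontier K | K. compact K \<and> convex K \<and> 0 \<in> interior K}"

definition radial_fun :: "'a::euclidean_space set \<Rightarrow> 'a \<Rightarrow> real" where
  "radial_fun F x = (THE t. t > 0 \<and> t *\<^sub>R x \<in> F)"

definition support_fun :: "'a::euclidean_space set \<Rightarrow> 'a \<Rightarrow> real" where
  "support_fun F N = (SUP x\<in>sphere 0 1. radial_fun F x * inner x N)"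

definition admissible :: "(('a::euclidean_space \<Rightarrow> real) \<times> ('a \<Rightarrow> real)) set" where
  "admissible = {(h, \<rho>). continuous_on (sphere 0 1) h \<and> continuous_on (sphere 0 1) \<rho> \<and>
      (\<forall>x\<in>sphere 0 1. h x > 0 \<and> \<rho> x > 0) \<and>
      (\<forall>x\<in>sphere 0 1. \<forall>N\<in>sphere 0 1. inner x N > 0 \<longrightarrow>
          ln (h N) - ln (\<rho> x) \<ge> ln (inner x N))}"

definition Qfun :: "'a::euclidean_space measure \<Rightarrow> ('a \<Rightarrow> real) \<Rightarrow> ('a \<Rightarrow> real) \<Rightarrow> real" where
  "Qfun \<mu> h \<rho> = (\<integral>x. ln (h x) \<partial>sphere_measure) - (\<integral>x. ln (\<rho> x) \<partial>\<mu>)"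

definition is_Q_minimizer :: "'a::euclidean_space measure \<Rightarrow> ('a \<Rightarrow> real) \<Rightarrow> ('a \<Rightarrow> real) \<Rightarrow> bool" where
  "is_Q_minimizer \<mu> h \<rho> \<longleftrightarrow> (h, \<rho>) \<in> admissible \<and>
      (\<forall>(h', \<rho>')\<in>admissible. Qfun \<mu> h \<rho> \<le> Qfun \<mu> h' \<rho>')"

definition is_body_pair :: "('a::euclidean_space \<Rightarrow> real) \<Rightarrow> ('a \<Rightarrow> real) \<Rightarrow> bool" where
  "is_body_pair h \<rho> \<longleftrightarrow> (\<exists>F\<in>hypersurfaces. \<forall>x\<in>sphere 0 1.
      \<rho> x = radial_fun F x \<and> h x = support_fun F x)"

end

theory Submission
  imports Defs
begin

text \<open>
  For a minimizing pair, \<open>h\<close> equals the support function \<open>H[\<rho>]\<close>: the pair \<open>(H[\<rho>], \<rho>)\<close> is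
  admissible, \<open>H[\<rho>] \<le> h\<close>, and \<open>\<sigma>\<close> charges every open cap. Since \<open>\<mu>\<close> and \<open>\<sigma>\<close> have the same total
  mass, \<open>Q\<close> is invariant under \<open>(h, \<rho>) \<mapsto> (c h, c \<rho>)\<close>, and \<open>Q(min) + Q(max) = Q\<^sub>1 + Q\<^sub>2\<close>;
  so minimizers are closed under scaling and pointwise minima. Comparing the support functions
  of these new minimizers gives \<open>H[min \<rho>\<^sub>1 (c \<rho>\<^sub>2)] = min H[\<rho>\<^sub>1] (c H[\<rho>\<^sub>2])\<close> for every \<open>c > 0\<close>.
  Taking \<open>c = H[\<rho>\<^sub>1](w) / H[\<rho>\<^sub>2](w)\<close> yields a common subgradient of \<open>H[\<rho>\<^sub>1]\<close> and \<open>c H[\<rho>\<^sub>2]\<close> at \<open>w\<close>,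
  and monotonicity of subgradients bounds the oscillation of \<open>H[\<rho>\<^sub>2] / H[\<rho>\<^sub>1]\<close> along a segment
  by a telescoping sum that tends to zero. Hence \<open>h\<^sub>2 = k h\<^sub>1\<close>, and because every boundary point of
  a convex body has a touching normal this transfers to \<open>\<rho>\<^sub>2 = k \<rho>\<^sub>1\<close>.
\<close>

section \<open>Support functions of functions on the sphere\<close>

text \<open>The paper's \<open>H[\<rho>]\<close>; unlike \<^const>\<open>support_fun\<close> it needs no underlying body.\<close>
definition sphere_support :: "('a::euclidean_space \<Rightarrow> real) \<Rightarrow> 'a \<Rightarrow> real" where
  "sphere_support f w = (SUP x\<in>sphere 0 1. f x * inner x w)"

lemma sphere_support_zero [simp]: "sphere_support f (0::'a::euclidean_space) = 0"
  by (simp add: sphere_support_def)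

lemma bdd_above_sphere_support:
  fixes f :: "'a::euclidean_space \<Rightarrow> real"
  assumes "continuous_on (sphere 0 1) f"
  shows "bdd_above ((\<lambda>x. f x * inner x w) ` sphere 0 1)"
  by (intro bounded_imp_bdd_above compact_imp_bounded compact_continuous_image continuous_intros assms)
    simp

lemma sphere_support_upper:
  fixes f :: "'a::euclidean_space \<Rightarrow> real"
  assumes "continuous_on (sphere 0 1) f" "x \<in> sphere 0 1"
  shows "f x * inner x w \<le> sphere_support f w"
  unfolding sphere_support_def using bdd_above_sphere_support[OF assms(1)] assms(2)
  by (rule cSUP_upper2) auto

lemma sphere_support_least:
  fixes f :: "'a::euclidean_space \<Rightarrow> real"
  assumes "\<And>x. x \<in> sphere 0 1 \<Longrightarrow> f x * inner x w \<le> c"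
  shows "sphere_support f w \<le> c"
  unfolding sphere_support_def using assms by (intro cSUP_least) auto

lemma sphere_support_attained:
  fixes f :: "'a::euclidean_space \<Rightarrow> real"
  assumes "continuous_on (sphere 0 1) f"
  obtains x where "x \<in> sphere 0 1" "sphere_support f w = f x * inner x w"
proof -
  have cont: "continuous_on (sphere 0 1) (\<lambda>x. f x * inner x w)"
    by (intro continuous_intros assms)
  obtain x where x: "x \<in> sphere 0 1" "\<And>y. y \<in> sphere 0 1 \<Longrightarrow> f y * inner y w \<le> f x * inner x w"
    using continuous_attains_sup[OF compact_sphere _ cont] by auto
  then have "sphere_support f w = f x * inner x w"
    by (intro antisym sphere_support_least sphere_support_upper[OF assms])
  with x(1) show ?thesis by (rule that)
qed

lemma sphere_support_scaleR:
  fixes f :: "'a::euclidean_space \<Rightarrow> real"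
  assumes "continuous_on (sphere 0 1) f" "0 < r"
  shows "sphere_support f (r *\<^sub>R w) = r * sphere_support f w"
proof (rule antisym)
  obtain x where x: "x \<in> sphere 0 1" "sphere_support f (r *\<^sub>R w) = f x * inner x (r *\<^sub>R w)"
    using sphere_support_attained[OF assms(1)] .
  show "sphere_support f (r *\<^sub>R w) \<le> r * sphere_support f w"
    using x sphere_support_upper[OF assms(1) x(1), of w] assms(2) by simp
next
  obtain x where x: "x \<in> sphere 0 1" "sphere_support f w = f x * inner x w"
    using sphere_support_attained[OF assms(1)] .
  show "r * sphere_support f w \<le> sphere_support f (r *\<^sub>R w)"
    using x sphere_support_upper[OF assms(1) x(1), of "r *\<^sub>R w"] assms(2) by (simp add: algebra_simps)
qed

lemma sphere_support_ge_norm: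
  fixes f :: "'a::euclidean_space \<Rightarrow> real"
  assumes "continuous_on (sphere 0 1) f" "\<And>x. x \<in> sphere 0 1 \<Longrightarrow> m \<le> f x" "w \<noteq> 0"
  shows "m * norm w \<le> sphere_support f w"
proof -
  have s: "sgn w \<in> sphere 0 1" using assms(3) by (simp add: norm_sgn)
  have "inner (sgn w) w = norm w"
    using assms(3)
    by (simp add: sgn_div_norm divide_inverse_commute power2_norm_eq_inner[symmetric] power2_eq_square)
  then have "m * norm w \<le> f (sgn w) * inner (sgn w) w"
    using assms(2)[OF s] by (simp add: mult_right_mono)
  also have "\<dots> \<le> sphere_support f w" by (rule sphere_support_upper[OF assms(1) s])
  finally show ?thesis .
qed

lemma sphere_support_le_add_norm:
  fixes f :: "'a::euclidean_space \<Rightarrow> real"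
  assumes "continuous_on (sphere 0 1) f" "\<And>x. x \<in> sphere 0 1 \<Longrightarrow> \<bar>f x\<bar> \<le> M"
  shows "sphere_support f w \<le> sphere_support f v + M * norm (w - v)"
proof (rule sphere_support_least)
  fix x :: 'a assume x: "x \<in> sphere 0 1"
  have "f x * inner x (w - v) \<le> \<bar>f x\<bar> * \<bar>inner x (w - v)\<bar>"
    by (metis abs_ge_self abs_mult)
  also have "\<dots> \<le> \<bar>f x\<bar> * norm (w - v)"
    using Cauchy_Schwarz_ineq2[of x "w - v"] x by (simp add: mult_left_mono)
  also have "\<dots> \<le> M * norm (w - v)" using assms(2)[OF x] by (simp add: mult_right_mono)
  finally show "f x * inner x w \<le> sphere_support f v + M * norm (w - v)"
    using sphere_support_upper[OF assms(1) x, of v] by (simp add: inner_diff_right algebra_simps)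
qed

lemma continuous_on_sphere_support:
  fixes f :: "'a::euclidean_space \<Rightarrow> real"
  assumes "continuous_on (sphere 0 1) f"
  shows "continuous_on A (sphere_support f)"
proof -
  obtain M where M: "\<And>x. x \<in> sphere 0 1 \<Longrightarrow> \<bar>f x\<bar> \<le> M"
    using compact_imp_bounded[OF compact_continuous_image[OF assms compact_sphere]]
    unfolding bounded_real by blast
  obtain x0 :: 'a where "x0 \<in> sphere 0 1"
    using vector_choose_size[of 1] by auto
  then have "0 \<le> M" using M[of x0] by linarith
  have "M-lipschitz_on A (sphere_support f)"
  proof (rule lipschitz_onI)
    fix w v assume "w \<in> A" "v \<in> A"
    show "dist (sphere_support f w) (sphere_support f v) \<le> M * dist w v"
      using sphere_support_le_add_norm[OF assms M, of w v] sphere_support_le_add_norm[OF assms M, of v w]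
      by (simp add: dist_real_def dist_norm norm_minus_commute abs_le_iff)
  qed fact
  then show ?thesis by (rule lipschitz_on_continuous_on)
qed

section \<open>Sublinear functions with proportional subgradients\<close>

lemma inner_gap_nonneg_if_subgradients:
  fixes A :: "'a::real_inner \<Rightarrow> real" and V :: "'a \<Rightarrow> 'a"
  assumes "inner (V s) t \<le> A t" "inner (V t) s \<le> A s" "inner (V s) s = A s" "inner (V t) t = A t"
  shows "0 \<le> inner (V t - V s) (t - s)"
  using assms by (simp add: inner_diff_left inner_diff_right inner_commute)

text \<open>
  The hypotheses say that \<open>V s\<close>, \<open>V t\<close> are subgradients of \<open>A\<close> at \<open>s\<close>, \<open>t\<close> and that
  \<open>(B t / A t) V t\<close> is a subgradient of \<open>B\<close> at \<open>t\<close>.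
\<close>
lemma ratio_increase_le_inner_gap:
  fixes A B :: "'a::real_inner \<Rightarrow> real" and V :: "'a \<Rightarrow> 'a"
  assumes "0 < \<alpha>" "\<alpha> \<le> A s" "0 < B t" "B t / A t \<le> \<beta>" "0 < A t"
    and "inner (V s) t \<le> A t" "inner (V t) s \<le> A s" "inner (V s) s = A s" "inner (V t) t = A t"
    and "inner (V t) s * (B t / A t) \<le> B s"
  shows "B t / A t - B s / A s \<le> \<beta> / \<alpha> * inner (V t - V s) (t - s)"
proof -
  define D where "D = inner (V t - V s) (t - s)"
  define Rs Rt where "Rs = B s / A s" and "Rt = B t / A t"
  have D: "0 \<le> D" unfolding D_def using assms(6-9) by (rule inner_gap_nonneg_if_subgradients)
  have Rt: "0 < Rt" "Rt \<le> \<beta>" using assms(3-5) by (auto simp: Rt_def)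
  have "A s - D \<le> inner (V t) s"
    using assms(6-9) by (simp add: D_def inner_diff_left inner_diff_right inner_commute)
  then have "Rt * (A s - D) \<le> Rt * inner (V t) s" using Rt(1) by simp
  also have "\<dots> \<le> Rs * A s" using assms(2,10) \<open>0 < \<alpha>\<close> by (simp add: Rs_def Rt_def mult.commute)
  finally have gap: "(Rt - Rs) * A s \<le> Rt * D" by (simp add: algebra_simps)
  show ?thesis
  proof (cases "Rs \<le> Rt")
    case True
    have "(Rt - Rs) * \<alpha> \<le> (Rt - Rs) * A s" using True assms(2) by (simp add: mult_left_mono)
    also have "\<dots> \<le> \<beta> * D" using gap mult_right_mono[OF Rt(2) D] by linarith
    finally show ?thesis using \<open>0 < \<alpha>\<close> by (simp add: Rs_def Rt_def D_def field_simps)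
  next
    case False
    have "0 \<le> \<beta> / \<alpha> * D" using D Rt \<open>0 < \<alpha>\<close> by simp
    with False show ?thesis by (simp add: Rs_def Rt_def D_def)
  qed
qed

lemma endpoints_eq_if_dist_le_inner_gap:
  fixes R :: "'a::real_inner \<Rightarrow> real" and V :: "'a \<Rightarrow> 'a"
  assumes gap: "\<And>u w. u \<in> closed_segment y z \<Longrightarrow> w \<in> closed_segment y z \<Longrightarrow>
                  \<bar>R u - R w\<bar> \<le> C * inner (V u - V w) (u - w)"
  shows "R z = R y"
proof -
  define p where "p N k = y + (real k / real N) *\<^sub>R (z - y)" for N k :: nat
  have p_in: "p N k \<in> closed_segment y z" if "k \<le> N" for N k
  proof -
    have "p N k = (1 - real k / real N) *\<^sub>R y + (real k / real N) *\<^sub>R z"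
      by (simp add: p_def algebra_simps)
    moreover have "0 \<le> real k / real N" "real k / real N \<le> 1" using that by (auto simp: divide_le_eq_1)
    ultimately show ?thesis unfolding closed_segment_def by blast
  qed
  have telescope: "\<bar>R (p N k) - R y\<bar> \<le> C * inner (V (p N k) - V y) (z - y) / real N"
    if "k \<le> N" for N k
    using that
  proof (induction k)
    case 0
    then show ?case by (simp add: p_def)
  next
    case (Suc k)
    have step: "p N (Suc k) - p N k = (1 / real N) *\<^sub>R (z - y)"
      by (simp add: p_def algebra_simps add_divide_distrib)
    have "\<bar>R (p N (Suc k)) - R y\<bar> \<le> \<bar>R (p N (Suc k)) - R (p N k)\<bar> + \<bar>R (p N k) - R y\<bar>"
      by linarith
    also have "\<dots> \<le> C * inner (V (p N (Suc k)) - V (p N k)) (p N (Suc k) - p N k)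
                   + C * inner (V (p N k) - V y) (z - y) / real N"
      using gap[OF p_in p_in, of "Suc k" N k N] Suc by simp
    also have "\<dots> = C * inner (V (p N (Suc k)) - V y) (z - y) / real N"
      unfolding step by (simp add: inner_diff_left add_divide_distrib diff_divide_distrib algebra_simps)
    finally show ?case .
  qed
  have "\<bar>R z - R y\<bar> \<le> C * inner (V z - V y) (z - y) / real N" if "0 < N" for N
    using telescope[of N N] that by (simp add: p_def)
  then have "\<bar>R z - R y\<bar> \<le> 0"
    by (intro LIMSEQ_le_const[OF lim_const_over_n[of "C * inner (V z - V y) (z - y)"]])
      (auto intro: exI[of _ 1])
  then show ?thesis by simp
qed

lemma ratio_eq_on_segment:
  fixes A B :: "'a::real_inner \<Rightarrow> real" and V :: "'a \<Rightarrow> 'a"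
  assumes "0 < \<alpha>"
    and bounds: "\<And>w. w \<in> closed_segment y z \<Longrightarrow> \<alpha> \<le> A w \<and> 0 < B w \<and> B w / A w \<le> \<beta>"
    and subgrad: "\<And>w u. w \<in> closed_segment y z \<Longrightarrow> u \<in> closed_segment y z \<Longrightarrow>
              inner (V w) u \<le> A u \<and> inner (V w) u * (B w / A w) \<le> B u"
    and touch: "\<And>w. w \<in> closed_segment y z \<Longrightarrow> inner (V w) w = A w"
  shows "B z / A z = B y / A y"
proof (rule endpoints_eq_if_dist_le_inner_gap[where C = "\<beta> / \<alpha>" and V = V])
  have increase: "B u / A u - B w / A w \<le> \<beta> / \<alpha> * inner (V u - V w) (u - w)"
    if "u \<in> closed_segment y z" "w \<in> closed_segment y z" for u w
    using bounds[OF that(1)] bounds[OF that(2)] subgrad[OF that(1) that(2)] subgrad[OF that(2) that(1)]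
      touch[OF that(1)] touch[OF that(2)] \<open>0 < \<alpha>\<close>
    by (intro ratio_increase_le_inner_gap[OF \<open>0 < \<alpha>\<close>]) auto
  fix u w assume "u \<in> closed_segment y z" "w \<in> closed_segment y z"
  then show "\<bar>B u / A u - B w / A w\<bar> \<le> \<beta> / \<alpha> * inner (V u - V w) (u - w)"
    using increase[of u w] increase[of w u]
    by (simp add: abs_le_iff inner_diff_left inner_diff_right inner_commute algebra_simps)
qed

section \<open>The lattice identity forces proportional support functions\<close>

lemma sphere_support_min_eq_everywhere:
  fixes \<rho>1 \<rho>2 :: "'a::euclidean_space \<Rightarrow> real"
  assumes "continuous_on (sphere 0 1) \<rho>1" "continuous_on (sphere 0 1) \<rho>2"
    and "\<And>N. N \<in> sphere 0 1 \<Longrightarrow>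
       sphere_support (\<lambda>x. min (\<rho>1 x) (c * \<rho>2 x)) N
         = min (sphere_support \<rho>1 N) (c * sphere_support \<rho>2 N)"
  shows "sphere_support (\<lambda>x. min (\<rho>1 x) (c * \<rho>2 x)) w
           = min (sphere_support \<rho>1 w) (c * sphere_support \<rho>2 w)"
proof (cases "w = 0")
  case False
  have cont: "continuous_on (sphere 0 1) (\<lambda>x. min (\<rho>1 x) (c * \<rho>2 x))"
    by (intro continuous_intros assms)
  have w: "w = norm w *\<^sub>R sgn w" "sgn w \<in> sphere 0 1" "0 < norm w"
    using False by (auto simp: sgn_div_norm norm_sgn)
  have "norm w * min (sphere_support \<rho>1 (sgn w)) (c * sphere_support \<rho>2 (sgn w))
      = min (norm w * sphere_support \<rho>1 (sgn w)) (c * (norm w * sphere_support \<rho>2 (sgn w)))"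
    using w(3) by (simp add: min_mult_distrib_left mult.left_commute)
  then show ?thesis using assms(3)[OF w(2)]
    by (subst (1 2 3) w(1)) (simp add: sphere_support_scaleR[OF _ w(3)] assms(1,2) cont)
qed simp

lemma sphere_support_ratio_subgradient:
  fixes \<rho>1 \<rho>2 :: "'a::euclidean_space \<Rightarrow> real"
  assumes "continuous_on (sphere 0 1) \<rho>1" "continuous_on (sphere 0 1) \<rho>2"
    and lattice: "\<And>c u. 0 < c \<Longrightarrow> sphere_support (\<lambda>x. min (\<rho>1 x) (c * \<rho>2 x)) u
                                  = min (sphere_support \<rho>1 u) (c * sphere_support \<rho>2 u)"
    and pos: "0 < sphere_support \<rho>1 w" "0 < sphere_support \<rho>2 w"
  obtains v where "\<And>u. inner v u \<le> sphere_support \<rho>1 u"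
    "\<And>u. inner v u * (sphere_support \<rho>2 w / sphere_support \<rho>1 w) \<le> sphere_support \<rho>2 u"
    "inner v w = sphere_support \<rho>1 w"
proof -
  let ?H1 = "sphere_support \<rho>1" and ?H2 = "sphere_support \<rho>2"
  define c where "c = ?H1 w / ?H2 w"
  have "0 < c" using pos by (simp add: c_def)
  define m where "m x = min (\<rho>1 x) (c * \<rho>2 x)" for x
  have cont: "continuous_on (sphere 0 1) m" unfolding m_def by (intro continuous_intros assms)
  obtain x where x: "x \<in> sphere 0 1" "sphere_support m w = m x * inner x w"
    using sphere_support_attained[OF cont] .
  have le: "inner (m x *\<^sub>R x) u \<le> min (?H1 u) (c * ?H2 u)" for u
    using sphere_support_upper[OF cont x(1), of u] lattice[OF \<open>0 < c\<close>, of u] by (simp add: m_def[abs_def])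
  have "inner (m x *\<^sub>R x) u * (?H2 w / ?H1 w) \<le> c * ?H2 u * (?H2 w / ?H1 w)" for u
    using le[of u] pos by (intro mult_right_mono) auto
  also have "c * ?H2 u * (?H2 w / ?H1 w) = ?H2 u" for u using pos by (simp add: c_def)
  finally have "inner (m x *\<^sub>R x) u * (?H2 w / ?H1 w) \<le> ?H2 u" for u .
  moreover have "inner (m x *\<^sub>R x) w = ?H1 w"
    using x(2) lattice[OF \<open>0 < c\<close>, of w] pos by (simp add: m_def[abs_def] c_def)
  ultimately show ?thesis using that[of "m x *\<^sub>R x"] le by simp
qed

lemma zero_notin_closed_segment_sphere:
  fixes y z :: "'a::real_normed_vector"
  assumes "norm y = 1" "norm z = 1" "z \<noteq> - y"
  shows "0 \<notin> closed_segment y z"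
proof
  assume "0 \<in> closed_segment y z"
  then obtain u where u: "0 \<le> u" "u \<le> 1" "(1 - u) *\<^sub>R y = - (u *\<^sub>R z)"
    unfolding closed_segment_def by (auto simp: eq_neg_iff_add_eq_0)
  then have "norm ((1 - u) *\<^sub>R y) = norm (u *\<^sub>R z)" by simp
  then have "1 - u = u" using u(1,2) assms by simp
  then have "u = 1/2" by simp
  with u(3) have "(1/2) *\<^sub>R (y + z) = 0" by (simp add: scaleR_right_distrib)
  then have "y = - z" by (simp add: eq_neg_iff_add_eq_0)
  with assms(3) show False by simp
qed

lemma sphere_obtain_neq_pm:
  fixes y :: "'a::euclidean_space"
  assumes "DIM('a) \<ge> 2"
  obtains u :: 'a where "norm u = 1" "u \<noteq> y" "u \<noteq> - y"
proof -
  obtain b1 b2 :: 'a where b: "b1 \<in> Basis" "b2 \<in> Basis" "b1 \<noteq> b2"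
    using assms obtain_subset_with_card_n[of 2 "Basis :: 'a set"]
    by (metis card_2_iff insert_subset)
  then have "b2 \<noteq> - b1" "inner b1 b2 = 0"
    using inner_not_same_Basis[of b1 b2] by (auto simp: inner_minus_right)
  then show ?thesis
    using that[of b1] that[of b2] b
    by (cases "y = b1 \<or> y = - b1") (auto simp: minus_equation_iff equation_minus_iff)
qed

lemma compact_continuous_pos_lower_bound:
  fixes f :: "'a::topological_space \<Rightarrow> real"
  assumes "compact S" "continuous_on S f" "\<And>x. x \<in> S \<Longrightarrow> 0 < f x"
  obtains m where "0 < m" "\<And>x. x \<in> S \<Longrightarrow> m \<le> f x"
proof (cases "S = {}")
  case False
  then obtain x0 where "x0 \<in> S" "\<And>x. x \<in> S \<Longrightarrow> f x0 \<le> f x"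
    using continuous_attains_inf[OF assms(1) _ assms(2)] by auto
  with assms(3) that show ?thesis by blast
qed (use that[of 1] in auto)

lemma sphere_support_ratio_eq_on_segment:
  fixes \<rho>1 \<rho>2 :: "'a::euclidean_space \<Rightarrow> real"
  assumes c1: "continuous_on (sphere 0 1) \<rho>1" and c2: "continuous_on (sphere 0 1) \<rho>2"
    and p1: "\<And>x. x \<in> sphere 0 1 \<Longrightarrow> 0 < \<rho>1 x" and p2: "\<And>x. x \<in> sphere 0 1 \<Longrightarrow> 0 < \<rho>2 x"
    and lattice: "\<And>c u. 0 < c \<Longrightarrow> sphere_support (\<lambda>x. min (\<rho>1 x) (c * \<rho>2 x)) u
                                  = min (sphere_support \<rho>1 u) (c * sphere_support \<rho>2 u)"
    and yz: "norm y = 1" "norm z = 1" "z \<noteq> - y"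
  shows "sphere_support \<rho>2 z / sphere_support \<rho>1 z = sphere_support \<rho>2 y / sphere_support \<rho>1 y"
proof -
  let ?H1 = "sphere_support \<rho>1" and ?H2 = "sphere_support \<rho>2" and ?S = "closed_segment y z"
  obtain m1 where m1: "0 < m1" "\<And>x. x \<in> sphere 0 1 \<Longrightarrow> m1 \<le> \<rho>1 x"
    using compact_continuous_pos_lower_bound[OF compact_sphere c1 p1] by blast
  obtain m2 where m2: "0 < m2" "\<And>x. x \<in> sphere 0 1 \<Longrightarrow> m2 \<le> \<rho>2 x"
    using compact_continuous_pos_lower_bound[OF compact_sphere c2 p2] by blast
  obtain M2 where M2: "\<And>x. x \<in> sphere 0 1 \<Longrightarrow> \<bar>\<rho>2 x\<bar> \<le> M2"
    using compact_imp_bounded[OF compact_continuous_image[OF c2 compact_sphere]]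
    unfolding bounded_real by blast
  have nonzero: "w \<noteq> 0" if "w \<in> ?S" for w
    using zero_notin_closed_segment_sphere[OF yz] that by auto
  obtain \<delta> where \<delta>: "0 < \<delta>" "\<And>w. w \<in> ?S \<Longrightarrow> \<delta> \<le> norm w"
  proof -
    obtain w0 where "w0 \<in> ?S" "\<And>w. w \<in> ?S \<Longrightarrow> norm w0 \<le> norm w"
      using continuous_attains_inf[OF compact_segment _ continuous_on_norm_id, of y z] by auto
    with nonzero that[of "norm w0"] show ?thesis by simp
  qed
  have H1_ge: "m1 * norm w \<le> ?H1 w" if "w \<in> ?S" for w
    by (rule sphere_support_ge_norm[OF c1 m1(2) nonzero[OF that]])
  have pos: "0 < ?H1 w" "0 < ?H2 w" if "w \<in> ?S" for w
    using sphere_support_ge_norm[OF c1 m1(2) nonzero[OF that]] m1(1)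
      sphere_support_ge_norm[OF c2 m2(2) nonzero[OF that]] m2(1) nonzero[OF that]
    by (metis less_le_trans mult_pos_pos zero_less_norm_iff)+
  have H2_le: "?H2 w \<le> M2 * norm w" for w
    using sphere_support_le_add_norm[OF c2 M2, of w 0] by simp
  have "\<forall>w\<in>?S. \<exists>v. (\<forall>u. inner v u \<le> ?H1 u \<and> inner v u * (?H2 w / ?H1 w) \<le> ?H2 u)
                     \<and> inner v w = ?H1 w"
    using sphere_support_ratio_subgradient[OF c1 c2 lattice pos] by metis
  then obtain V where V: "\<And>w u. w \<in> ?S \<Longrightarrow>
        inner (V w) u \<le> ?H1 u \<and> inner (V w) u * (?H2 w / ?H1 w) \<le> ?H2 u"
      "\<And>w. w \<in> ?S \<Longrightarrow> inner (V w) w = ?H1 w"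
    by metis
  show ?thesis
  proof (rule ratio_eq_on_segment[where \<alpha> = "m1 * \<delta>" and \<beta> = "M2 / m1" and V = V])
    show "0 < m1 * \<delta>" using m1(1) \<delta>(1) by simp
  next
    fix w assume w: "w \<in> ?S"
    have "m1 * \<delta> \<le> ?H1 w"
      using H1_ge[OF w] \<delta>(2)[OF w] m1(1) by (meson mult_left_mono less_imp_le order_trans)
    moreover have "?H2 w / ?H1 w \<le> (M2 * norm w) / (m1 * norm w)"
      using H2_le[of w] H1_ge[OF w] pos(2)[OF w] m1(1) nonzero[OF w] by (intro frac_le) auto
    ultimately show "m1 * \<delta> \<le> ?H1 w \<and> 0 < ?H2 w \<and> ?H2 w / ?H1 w \<le> M2 / m1"
      using pos(2)[OF w] nonzero[OF w] by simp
  qed (use V in simp_all)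
qed

lemma sphere_support_ratio_eq:
  fixes \<rho>1 \<rho>2 :: "'a::euclidean_space \<Rightarrow> real"
  assumes "DIM('a) \<ge> 2"
    and c: "continuous_on (sphere 0 1) \<rho>1" "continuous_on (sphere 0 1) \<rho>2"
    and p: "\<And>x. x \<in> sphere 0 1 \<Longrightarrow> 0 < \<rho>1 x" "\<And>x. x \<in> sphere 0 1 \<Longrightarrow> 0 < \<rho>2 x"
    and lattice: "\<And>c N. 0 < c \<Longrightarrow> N \<in> sphere 0 1 \<Longrightarrow>
       sphere_support (\<lambda>x. min (\<rho>1 x) (c * \<rho>2 x)) N
         = min (sphere_support \<rho>1 N) (c * sphere_support \<rho>2 N)"
    and "y \<in> sphere 0 1" "z \<in> sphere 0 1"
  shows "sphere_support \<rho>2 z / sphere_support \<rho>1 z = sphere_support \<rho>2 y / sphere_support \<rho>1 y"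
proof -
  note on_segment =
    sphere_support_ratio_eq_on_segment[OF c p sphere_support_min_eq_everywhere[OF c lattice]]
  obtain u :: 'a where u: "norm u = 1" "u \<noteq> y" "u \<noteq> - y"
    using sphere_obtain_neq_pm[OF assms(1)] .
  \<comment> \<open>The segment from \<open>y\<close> to \<open>-y\<close> passes through the origin; detour via \<open>u\<close>.\<close>
  show ?thesis
  proof (cases "z = - y")
    case True
    then show ?thesis using on_segment[of y u] on_segment[of u z] u assms(7,8) by auto
  qed (use on_segment[of y z] assms(7,8) in auto)
qed

section \<open>The spherical Lebesgue measure\<close>

abbreviation sphere_sets :: "'a::euclidean_space set set" where
  "sphere_sets \<equiv> sets (restrict_space borel (sphere 0 1))"

lemma cone_eq_vimage_sgn:
  fixes A :: "'a::real_normed_vector set"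
  assumes "A \<subseteq> sphere 0 1"
  shows "{t *\<^sub>R x | t x. t \<in> {0<..1} \<and> x \<in> A} = sgn -` A \<inter> (cball 0 1 - {0})"
proof (intro equalityI subsetI)
  fix y assume "y \<in> {t *\<^sub>R x | t x. t \<in> {0<..1} \<and> x \<in> A}"
  then obtain t x where "y = t *\<^sub>R x" "0 < t" "t \<le> 1" "x \<in> A" by auto
  with assms show "y \<in> sgn -` A \<inter> (cball 0 1 - {0})"
    by (auto simp: sgn_scaleR sgn_div_norm subset_iff)
next
  fix y assume "y \<in> sgn -` A \<inter> (cball 0 1 - {0})"
  then show "y \<in> {t *\<^sub>R x | t x. t \<in> {0<..1} \<and> x \<in> A}"
    by (intro CollectI exI[of _ "norm y"] exI[of _ "sgn y"]) (auto simp: sgn_div_norm norm_sgn)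
qed

lemma measurable_sgn_punctured_ball:
  "sgn \<in> restrict_space lborel (cball 0 1 - {0}) \<rightarrow>\<^sub>M restrict_space borel (sphere (0::'a::euclidean_space) 1)"
  by (intro measurable_restrict_space2 measurable_restrict_space1) (auto simp: norm_sgn)

text \<open>
  Thus the cone construction of \<^const>\<open>sphere_measure\<close> is countably additive, and
  \<^const>\<open>measure_of\<close> does not fall back to its junk value, the zero measure.
\<close>
lemma sphere_measure_eq_distr:
  "(sphere_measure :: 'a::euclidean_space measure) = scale_measure (of_nat DIM('a))
     (distr (restrict_space lborel (cball 0 1 - {0})) (restrict_space borel (sphere 0 1)) sgn)"
  (is "_ = ?M")
proof -
  have "emeasure ?M A = of_nat DIM('a) * emeasure lborel {t *\<^sub>R x | t x. t \<in> {0<..1} \<and> x \<in> A}"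
    if "A \<in> sphere_sets" for A
  proof -
    have "A \<subseteq> sphere 0 1" using that sets.sets_into_space by (fastforce simp: space_restrict_space)
    then have cone: "{t *\<^sub>R x | t x. t \<in> {0<..1} \<and> x \<in> A} = sgn -` A \<inter> (cball 0 1 - {0})"
      by (rule cone_eq_vimage_sgn)
    have "emeasure (restrict_space lborel (cball 0 1 - {0})) (sgn -` A \<inter> (cball 0 1 - {0}))
        = emeasure lborel (sgn -` A \<inter> (cball (0::'a) 1 - {0}))"
      by (rule emeasure_restrict_space) auto
    then show ?thesis unfolding cone using that
      by (simp add: emeasure_distr[OF measurable_sgn_punctured_ball] space_restrict_space)
  qed
  moreover have "sigma_sets (sphere 0 1) sphere_sets = (sphere_sets :: 'a set set)"
    using sets.sigma_sets_eq[of "restrict_space borel (sphere (0::'a) 1)"]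
    by (simp add: space_restrict_space)
  moreover have "(sphere_sets :: 'a set set) \<subseteq> Pow (sphere 0 1)"
    using sets.sets_into_space by (fastforce simp: space_restrict_space)
  ultimately have "sphere_measure = measure_of (sphere 0 1) sphere_sets (emeasure ?M)"
    unfolding sphere_measure_def by (intro measure_of_eq) auto
  also have "\<dots> = ?M"
    using measure_of_of_measure[of ?M] by (simp add: space_scale_measure space_restrict_space)
  finally show ?thesis .
qed

lemma space_sphere_measure [simp]: "space (sphere_measure :: 'a::euclidean_space measure) = sphere 0 1"
  by (simp add: sphere_measure_eq_distr space_scale_measure space_restrict_space)

lemma sets_sphere_measure [simp]: "sets (sphere_measure :: 'a::euclidean_space measure) = sphere_sets"
  by (simp add: sphere_measure_eq_distr)

lemma emeasure_sphere_measure: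
  fixes A :: "'a::euclidean_space set"
  assumes "A \<in> sphere_sets"
  shows "emeasure sphere_measure A = of_nat DIM('a) * emeasure lborel (sgn -` A \<inter> (cball 0 1 - {0}))"
  using assms
  by (simp add: sphere_measure_eq_distr emeasure_distr[OF measurable_sgn_punctured_ball]
      emeasure_restrict_space space_restrict_space)

lemma finite_measure_sphere_measure: "finite_measure (sphere_measure :: 'a::euclidean_space measure)"
proof
  have "emeasure lborel (sgn -` sphere 0 1 \<inter> (cball 0 1 - {0::'a})) \<le> emeasure lborel (cball (0::'a) 1)"
    by (intro emeasure_mono) auto
  then have "emeasure lborel (sgn -` sphere 0 1 \<inter> (cball 0 1 - {0::'a})) < \<infinity>"
    using emeasure_lborel_cball_finite[of "0::'a" 1] by (simp add: top.not_eq_extremum le_less_trans)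
  then show "emeasure (sphere_measure :: 'a measure) (space sphere_measure) \<noteq> \<infinity>"
    using sets.top[of "restrict_space borel (sphere (0::'a) 1)"]
    by (simp add: emeasure_sphere_measure space_restrict_space ennreal_mult_eq_top_iff)
qed

lemma emeasure_lborel_open_pos:
  fixes U :: "'a::euclidean_space set"
  assumes "open U" "x \<in> U"
  shows "0 < emeasure lborel U"
proof -
  obtain r where "0 < r" "ball x r \<subseteq> U" using assms open_contains_ball by blast
  then have "emeasure lborel (ball x r) \<le> emeasure lborel U"
    using assms(1) by (intro emeasure_mono) auto
  moreover have "0 < emeasure lborel (ball x r)"
    using \<open>0 < r\<close> by (simp add: emeasure_ball)
  ultimately show ?thesis by (rule less_le_trans[rotated])
qed

lemma emeasure_sphere_measure_cap_pos:
  fixes N :: "'a::euclidean_space"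
  assumes "N \<in> sphere 0 1" "0 < e"
  shows "0 < emeasure sphere_measure (sphere 0 1 \<inter> ball N e)"
proof -
  define U where "U = sgn -` ball N e \<inter> (ball 0 1 - {0})"
  have "open (ball 0 1 - {0::'a})" by (simp add: open_Diff)
  moreover have "continuous_on (ball 0 1 - {0}) (sgn :: 'a \<Rightarrow> 'a)"
    by (intro continuous_intros) auto
  ultimately have "open U" unfolding U_def by (simp add: continuous_on_open_vimage)
  moreover have "(1/2) *\<^sub>R N \<in> U" using assms by (auto simp: U_def sgn_scaleR sgn_div_norm)
  ultimately have "0 < emeasure lborel U" by (rule emeasure_lborel_open_pos)
  also have "\<dots> \<le> emeasure lborel (sgn -` (sphere 0 1 \<inter> ball N e) \<inter> (cball 0 1 - {0}))"
    using measurable_sets[OF borel_measurable_sgn, of "sphere 0 1 \<inter> ball N e"]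
    by (intro emeasure_mono) (auto simp: U_def norm_sgn)
  finally show ?thesis
    by (subst emeasure_sphere_measure) (auto simp: sets_restrict_space ennreal_zero_less_mult_iff)
qed

lemma continuous_nonneg_integral_sphere_measure_eq_0:
  fixes g :: "'a::euclidean_space \<Rightarrow> real"
  assumes g: "continuous_on (sphere 0 1) g" "\<And>x. x \<in> sphere 0 1 \<Longrightarrow> 0 \<le> g x"
    and int: "integrable sphere_measure g" "(\<integral>x. g x \<partial>sphere_measure) = 0"
    and N: "N \<in> sphere 0 1"
  shows "g N = 0"
proof (rule ccontr)
  assume "g N \<noteq> 0"
  then have "0 < g N" using g(2)[OF N] by simp
  then obtain e where e: "0 < e" "\<And>x. x \<in> sphere 0 1 \<Longrightarrow> dist x N < e \<Longrightarrow> dist (g x) (g N) < g N"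
    using g(1) N unfolding continuous_on_iff by blast
  have "AE x in sphere_measure. g x = 0"
    using int g(2) by (subst integral_nonneg_eq_0_iff_AE[symmetric]) (auto intro: AE_I2)
  then obtain Z where Z: "{x \<in> sphere 0 1. g x \<noteq> 0} \<subseteq> Z" "Z \<in> null_sets sphere_measure"
    by (auto elim!: AE_E simp: null_sets_def)
  have "sphere 0 1 \<inter> ball N e \<subseteq> Z"
    using Z(1) e(2) by (force simp: dist_real_def dist_commute)
  then have "sphere 0 1 \<inter> ball N e \<in> null_sets sphere_measure"
    by (intro null_sets_subset[OF Z(2)]) (auto simp: sets_restrict_space)
  with emeasure_sphere_measure_cap_pos[OF N e(1)] show False by (simp add: null_sets_def)
qed

lemma integrable_continuous_on_sphere:
  fixes M :: "'a::euclidean_space measure" and f :: "'a \<Rightarrow> real"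
  assumes "finite_measure M" "sets M = sphere_sets" "continuous_on (sphere 0 1) f"
  shows "integrable M f"
proof -
  interpret finite_measure M by fact
  have space: "space M = sphere 0 1"
    using sets_eq_imp_space_eq[OF assms(2)] by (simp add: space_restrict_space)
  obtain B where "\<And>x. x \<in> sphere 0 1 \<Longrightarrow> norm (f x) \<le> B"
    using compact_imp_bounded[OF compact_continuous_image[OF assms(3) compact_sphere]]
    unfolding bounded_iff by blast
  moreover have "f \<in> borel_measurable M"
    unfolding measurable_cong_sets[OF assms(2) refl]
    by (rule borel_measurable_continuous_on_restrict[OF assms(3)])
  ultimately show ?thesis
    by (intro integrable_const_bound[where B = B]) (auto simp: space)
qed

section \<open>Admissible pairs and minimizers of \<open>Q\<close>\<close>

lemma admissible_iff:
  "(h, \<rho>) \<in> admissible \<longleftrightarrow> continuous_on (sphere 0 1) h \<and> continuous_on (sphere 0 1) \<rho> \<and>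
      (\<forall>x\<in>sphere 0 1. 0 < h x \<and> 0 < \<rho> x) \<and>
      (\<forall>x\<in>sphere 0 1. \<forall>N\<in>sphere (0::'a::euclidean_space) 1. 0 < inner x N \<longrightarrow> \<rho> x * inner x N \<le> h N)"
proof -
  have "ln (inner x N) \<le> ln (h N) - ln (\<rho> x) \<longleftrightarrow> \<rho> x * inner x N \<le> h N"
    if "0 < h N" "0 < \<rho> x" "0 < inner x N" for x N :: 'a
    using that by (simp add: ln_mult ln_le_cancel_iff[symmetric] algebra_simps del: ln_le_cancel_iff)
  then show ?thesis unfolding admissible_def by auto
qed

lemma admissibleD:
  assumes "(h, \<rho>) \<in> admissible"
  shows "continuous_on (sphere 0 1) h" "continuous_on (sphere 0 1) \<rho>"
    "\<And>x. x \<in> sphere 0 1 \<Longrightarrow> 0 < h x" "\<And>x. x \<in> sphere 0 1 \<Longrightarrow> 0 < \<rho> x"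
    "\<And>x N. x \<in> sphere 0 1 \<Longrightarrow> N \<in> sphere (0::'a::euclidean_space) 1 \<Longrightarrow> 0 < inner x N \<Longrightarrow>
       \<rho> x * inner x N \<le> h N"
  using assms unfolding admissible_iff by auto

lemma admissible_min:
  assumes "(h1, \<rho>1) \<in> admissible" "(h2, \<rho>2) \<in> admissible"
  shows "((\<lambda>x. min (h1 x) (h2 x)), (\<lambda>x. min (\<rho>1 x) (\<rho>2 x))) \<in> admissible"
  unfolding admissible_iff
proof (intro conjI ballI impI)
  fix x N :: 'a assume x: "x \<in> sphere 0 1" and N: "N \<in> sphere 0 1" and xN: "0 < inner x N"
  have "min (\<rho>1 x) (\<rho>2 x) * inner x N \<le> \<rho>1 x * inner x N"
    "min (\<rho>1 x) (\<rho>2 x) * inner x N \<le> \<rho>2 x * inner x N"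
    using xN by (simp_all add: mult_right_mono)
  then show "min (\<rho>1 x) (\<rho>2 x) * inner x N \<le> min (h1 N) (h2 N)"
    using admissibleD(5)[OF assms(1) x N xN] admissibleD(5)[OF assms(2) x N xN] by linarith
qed (use admissibleD[OF assms(1)] admissibleD[OF assms(2)] in \<open>auto intro: continuous_on_min\<close>)

lemma admissible_max:
  assumes "(h1, \<rho>1) \<in> admissible" "(h2, \<rho>2) \<in> admissible"
  shows "((\<lambda>x. max (h1 x) (h2 x)), (\<lambda>x. max (\<rho>1 x) (\<rho>2 x))) \<in> admissible"
  unfolding admissible_iff
proof (intro conjI ballI impI)
  fix x N :: 'a assume x: "x \<in> sphere 0 1" and N: "N \<in> sphere 0 1" and xN: "0 < inner x N"
  have "max (\<rho>1 x) (\<rho>2 x) * inner x N \<in> {\<rho>1 x * inner x N, \<rho>2 x * inner x N}"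
    by (simp add: max_def)
  then show "max (\<rho>1 x) (\<rho>2 x) * inner x N \<le> max (h1 N) (h2 N)"
    using admissibleD(5)[OF assms(1) x N xN] admissibleD(5)[OF assms(2) x N xN] by auto
qed (use admissibleD[OF assms(1)] admissibleD[OF assms(2)] in
    \<open>auto intro: continuous_on_max simp: less_max_iff_disj\<close>)

lemma admissible_scale:
  assumes "(h, \<rho>) \<in> admissible" "0 < c"
  shows "((\<lambda>x. c * h x), (\<lambda>x. c * \<rho> x)) \<in> admissible"
  using admissibleD[OF assms(1)] assms(2)
  unfolding admissible_iff by (auto intro!: continuous_intros simp: mult.assoc)

lemma admissible_sphere_support:
  assumes "continuous_on (sphere 0 1) \<rho>" "\<And>x. x \<in> sphere 0 1 \<Longrightarrow> 0 < \<rho> x"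
  shows "(sphere_support \<rho>, \<rho>) \<in> admissible"
proof -
  have "0 < sphere_support \<rho> x" if "x \<in> sphere (0::'a::euclidean_space) 1" for x
    using sphere_support_upper[OF assms(1) that, of x] assms(2)[OF that] that
    by (simp add: power2_norm_eq_inner[symmetric])
  then show ?thesis
    using assms sphere_support_upper[OF assms(1)] continuous_on_sphere_support[OF assms(1)]
    unfolding admissible_iff by auto
qed

lemma sphere_support_le_if_admissible:
  assumes "(h, \<rho>) \<in> admissible" "N \<in> sphere 0 1"
  shows "sphere_support \<rho> N \<le> h N"
proof (rule sphere_support_least)
  fix x :: 'a assume x: "x \<in> sphere 0 1"
  show "\<rho> x * inner x N \<le> h N"
  proof (cases "0 < inner x N")
    case False
    then have "\<rho> x * inner x N \<le> 0"
      using admissibleD(4)[OF assms(1) x] by (simp add: mult_nonneg_nonpos)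
    then show ?thesis using admissibleD(3)[OF assms] by linarith
  qed (use admissibleD(5)[OF assms(1) x assms(2)] in simp)
qed

lemma integrable_ln_continuous_on_sphere:
  fixes M :: "'a::euclidean_space measure" and f :: "'a \<Rightarrow> real"
  assumes "finite_measure M" "sets M = sphere_sets"
    and "continuous_on (sphere 0 1) f" "\<And>x. x \<in> sphere 0 1 \<Longrightarrow> 0 < f x"
  shows "integrable M (\<lambda>x. ln (f x))"
  using assms by (intro integrable_continuous_on_sphere continuous_on_ln) force+

lemma space_eq_sphere_if_sets_eq:
  fixes M :: "'a::euclidean_space measure"
  assumes "sets M = sphere_sets"
  shows "space M = sphere 0 1"
  using sets_eq_imp_space_eq[OF assms] by (simp add: space_restrict_space)

lemma integral_ln_min_add_max:
  fixes M :: "'a::euclidean_space measure" and f g :: "'a \<Rightarrow> real"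
  assumes M: "finite_measure M" "sets M = sphere_sets"
    and f: "continuous_on (sphere 0 1) f" "\<And>x. x \<in> sphere 0 1 \<Longrightarrow> 0 < f x"
    and g: "continuous_on (sphere 0 1) g" "\<And>x. x \<in> sphere 0 1 \<Longrightarrow> 0 < g x"
  shows "(\<integral>x. ln (min (f x) (g x)) \<partial>M) + (\<integral>x. ln (max (f x) (g x)) \<partial>M)
       = (\<integral>x. ln (f x) \<partial>M) + (\<integral>x. ln (g x) \<partial>M)"
proof -
  note int = integrable_ln_continuous_on_sphere[OF M]
  have "(\<integral>x. ln (min (f x) (g x)) \<partial>M) + (\<integral>x. ln (max (f x) (g x)) \<partial>M)
      = (\<integral>x. ln (min (f x) (g x)) + ln (max (f x) (g x)) \<partial>M)"
    using f g
    by (intro Bochner_Integration.integral_add[symmetric] int continuous_on_min continuous_on_max)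
      (auto simp: less_max_iff_disj)
  also have "\<dots> = (\<integral>x. ln (f x) + ln (g x) \<partial>M)"
    using f(2) g(2) space_eq_sphere_if_sets_eq[OF M(2)]
    by (intro Bochner_Integration.integral_cong) (auto simp: min_def max_def)
  also have "\<dots> = (\<integral>x. ln (f x) \<partial>M) + (\<integral>x. ln (g x) \<partial>M)"
    using f g by (intro Bochner_Integration.integral_add int)
  finally show ?thesis .
qed

lemma is_Q_minimizer_min:
  fixes \<mu> :: "'a::euclidean_space measure"
  assumes \<mu>: "finite_measure \<mu>" "sets \<mu> = sphere_sets"
    and min1: "is_Q_minimizer \<mu> h1 \<rho>1" and min2: "is_Q_minimizer \<mu> h2 \<rho>2"
  shows "is_Q_minimizer \<mu> (\<lambda>x. min (h1 x) (h2 x)) (\<lambda>x. min (\<rho>1 x) (\<rho>2 x))"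
proof -
  have adm: "(h1, \<rho>1) \<in> admissible" "(h2, \<rho>2) \<in> admissible"
    using min1 min2 by (auto simp: is_Q_minimizer_def)
  note f1 = admissibleD[OF adm(1)] and f2 = admissibleD[OF adm(2)]
  \<comment> \<open>\<open>Q\<close> is modular, and the \<open>max\<close> pair cannot beat the minimizer \<open>(h2, \<rho>2)\<close>.\<close>
  have "Qfun \<mu> (\<lambda>x. min (h1 x) (h2 x)) (\<lambda>x. min (\<rho>1 x) (\<rho>2 x))
      + Qfun \<mu> (\<lambda>x. max (h1 x) (h2 x)) (\<lambda>x. max (\<rho>1 x) (\<rho>2 x)) = Qfun \<mu> h1 \<rho>1 + Qfun \<mu> h2 \<rho>2"
    using integral_ln_min_add_max[OF finite_measure_sphere_measure sets_sphere_measure f1(1,3) f2(1,3)]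
      integral_ln_min_add_max[OF \<mu> f1(2,4) f2(2,4)]
    by (simp add: Qfun_def)
  moreover have "Qfun \<mu> h2 \<rho>2 \<le> Qfun \<mu> (\<lambda>x. max (h1 x) (h2 x)) (\<lambda>x. max (\<rho>1 x) (\<rho>2 x))"
    using min2 admissible_max[OF adm] by (auto simp: is_Q_minimizer_def)
  ultimately show ?thesis
    using min1 admissible_min[OF adm] by (fastforce simp: is_Q_minimizer_def)
qed

lemma integral_ln_scale:
  fixes M :: "'a::euclidean_space measure" and f :: "'a \<Rightarrow> real"
  assumes M: "finite_measure M" "sets M = sphere_sets"
    and f: "continuous_on (sphere 0 1) f" "\<And>x. x \<in> sphere 0 1 \<Longrightarrow> 0 < f x" and "0 < c"
  shows "(\<integral>x. ln (c * f x) \<partial>M) = measure M (sphere 0 1) * ln c + (\<integral>x. ln (f x) \<partial>M)"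
proof -
  interpret finite_measure M by fact
  have "(\<integral>x. ln (c * f x) \<partial>M) = (\<integral>x. ln c + ln (f x) \<partial>M)"
    using f(2) \<open>0 < c\<close> space_eq_sphere_if_sets_eq[OF M(2)]
    by (intro Bochner_Integration.integral_cong) (force simp: ln_mult)+
  also have "\<dots> = (\<integral>x. ln c \<partial>M) + (\<integral>x. ln (f x) \<partial>M)"
    by (intro Bochner_Integration.integral_add integrable_ln_continuous_on_sphere[OF M f]) auto
  finally show ?thesis by (simp add: space_eq_sphere_if_sets_eq[OF M(2)])
qed

lemma is_Q_minimizer_scale:
  fixes \<mu> :: "'a::euclidean_space measure"
  assumes \<mu>: "finite_measure \<mu>" "sets \<mu> = sphere_sets"
    and total: "measure \<mu> (sphere 0 1) = measure sphere_measure (sphere (0::'a) 1)"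
    and "0 < c" and min: "is_Q_minimizer \<mu> h \<rho>"
  shows "is_Q_minimizer \<mu> (\<lambda>x. c * h x) (\<lambda>x. c * \<rho> x)"
proof -
  have adm: "(h, \<rho>) \<in> admissible" using min by (simp add: is_Q_minimizer_def)
  note f = admissibleD[OF adm]
  have "Qfun \<mu> (\<lambda>x. c * h x) (\<lambda>x. c * \<rho> x) = Qfun \<mu> h \<rho>"
    using integral_ln_scale[OF finite_measure_sphere_measure sets_sphere_measure f(1,3) \<open>0 < c\<close>]
      integral_ln_scale[OF \<mu> f(2,4) \<open>0 < c\<close>] total
    by (simp add: Qfun_def)
  then show ?thesis
    using min admissible_scale[OF adm \<open>0 < c\<close>] by (simp add: is_Q_minimizer_def)
qed

lemma is_Q_minimizer_eq_sphere_support: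
  fixes \<mu> :: "'a::euclidean_space measure"
  assumes min: "is_Q_minimizer \<mu> h \<rho>" and N: "N \<in> sphere 0 1"
  shows "h N = sphere_support \<rho> N"
proof -
  have adm: "(h, \<rho>) \<in> admissible" using min by (simp add: is_Q_minimizer_def)
  note f = admissibleD[OF adm]
  have adm': "(sphere_support \<rho>, \<rho>) \<in> admissible"
    by (rule admissible_sphere_support[OF f(2,4)])
  note f' = admissibleD[OF adm']
  have int: "integrable sphere_measure (\<lambda>x. ln (h x))"
    "integrable sphere_measure (\<lambda>x. ln (sphere_support \<rho> x))"
    using integrable_ln_continuous_on_sphere[OF finite_measure_sphere_measure sets_sphere_measure]
      f(1,3) f'(1,3)
    by auto
  define g where "g x = ln (h x) - ln (sphere_support \<rho> x)" for x
  have g: "continuous_on (sphere 0 1) g" "integrable sphere_measure g"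
    unfolding g_def using f(1,3) f'(1,3) int by (force intro!: continuous_intros)+
  have g_nonneg: "0 \<le> g x" if "x \<in> sphere 0 1" for x
    using sphere_support_le_if_admissible[OF adm that] f'(3)[OF that] by (simp add: g_def)
  have "Qfun \<mu> h \<rho> \<le> Qfun \<mu> (sphere_support \<rho>) \<rho>"
    using min adm' by (auto simp: is_Q_minimizer_def)
  then have "(\<integral>x. g x \<partial>sphere_measure) \<le> 0"
    unfolding g_def Qfun_def using int by simp
  moreover have "0 \<le> (\<integral>x. g x \<partial>sphere_measure)"
    using g_nonneg by (intro integral_nonneg_AE AE_I2) simp
  ultimately have "g N = 0"
    using continuous_nonneg_integral_sphere_measure_eq_0[OF g(1) g_nonneg g(2) _ N] by simp
  then show ?thesis using f(3)[OF N] f'(3)[OF N] by (simp add: g_def)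
qed

lemma is_Q_minimizer_sphere_support_min:
  fixes \<mu> :: "'a::euclidean_space measure"
  assumes \<mu>: "finite_measure \<mu>" "sets \<mu> = sphere_sets"
    and total: "measure \<mu> (sphere 0 1) = measure sphere_measure (sphere (0::'a) 1)"
    and min1: "is_Q_minimizer \<mu> h1 \<rho>1" and min2: "is_Q_minimizer \<mu> h2 \<rho>2"
    and "0 < c" "N \<in> sphere 0 1"
  shows "sphere_support (\<lambda>x. min (\<rho>1 x) (c * \<rho>2 x)) N
       = min (sphere_support \<rho>1 N) (c * sphere_support \<rho>2 N)"
proof -
  have "is_Q_minimizer \<mu> (\<lambda>x. min (h1 x) (c * h2 x)) (\<lambda>x. min (\<rho>1 x) (c * \<rho>2 x))"
    using is_Q_minimizer_min[OF \<mu> min1 is_Q_minimizer_scale[OF \<mu> total \<open>0 < c\<close> min2]] .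
  from is_Q_minimizer_eq_sphere_support[OF this \<open>N \<in> sphere 0 1\<close>] show ?thesis
    using is_Q_minimizer_eq_sphere_support[OF min1 \<open>N \<in> sphere 0 1\<close>]
      is_Q_minimizer_eq_sphere_support[OF min2 \<open>N \<in> sphere 0 1\<close>] by simp
qed

section \<open>Radial and support functions of convex bodies\<close>

lemma scaleR_mem_interior_if_mem_closure:
  fixes K :: "'a::euclidean_space set"
  assumes "convex K" "0 \<in> interior K" "t *\<^sub>R x \<in> closure K" "0 \<le> s" "s < t"
  shows "s *\<^sub>R x \<in> interior K"
proof -
  have "0 < 1 - s / t" "1 - s / t \<le> 1" using assms(4,5) by simp_all
  then have "t *\<^sub>R x - (1 - s / t) *\<^sub>R (t *\<^sub>R x - 0) \<in> interior K"
    by (rule mem_interior_closure_convex_shrink[OF assms(1-3)])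
  moreover have "t *\<^sub>R x - (1 - s / t) *\<^sub>R (t *\<^sub>R x - 0) = s *\<^sub>R x"
    using assms(4,5) by (simp add: algebra_simps)
  ultimately show ?thesis by simp
qed

lemma radial_fun_frontier:
  fixes K :: "'a::euclidean_space set"
  assumes K: "compact K" "convex K" "0 \<in> interior K" and x: "x \<in> sphere 0 1"
  shows "0 < radial_fun (frontier K) x" "radial_fun (frontier K) x *\<^sub>R x \<in> frontier K"
proof -
  have "interior K \<noteq> {}" using K by auto
  then have ri: "rel_interior K = interior K" and rf: "rel_frontier K = frontier K"
    by (simp_all add: rel_interior_nonempty_interior rel_frontier_nonempty_interior)
  obtain d where d: "0 < d" "0 + d *\<^sub>R x \<in> rel_frontier K"
  proof -
    have "0 \<in> rel_interior K" "0 + x \<in> affine hull K" "x \<noteq> 0"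
      using K(3) ri x affine_hull_nonempty_interior[OF \<open>interior K \<noteq> {}\<close>] by auto
    then show ?thesis
      by (rule ray_to_rel_frontier[OF compact_imp_bounded[OF K(1)]]) (rule that; assumption)+
  qed
  have dF: "d *\<^sub>R x \<in> frontier K" using d(2) rf by simp
  have unique: "t = d" if t: "0 < t" "t *\<^sub>R x \<in> frontier K" for t
  proof (rule ccontr)
    assume "t \<noteq> d"
    then have "t *\<^sub>R x \<in> interior K \<or> d *\<^sub>R x \<in> interior K"
      using scaleR_mem_interior_if_mem_closure[OF K(2,3), of d x t] dF
        scaleR_mem_interior_if_mem_closure[OF K(2,3), of t x d] t d(1)
      by (auto simp: frontier_def linorder_neq_iff)
    with t(2) dF show False by (auto simp: frontier_def)
  qed
  have "radial_fun (frontier K) x = d"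
    unfolding radial_fun_def using d(1) dF unique by (intro the_equality) blast+
  with d(1) dF show "0 < radial_fun (frontier K) x" "radial_fun (frontier K) x *\<^sub>R x \<in> frontier K"
    by simp_all
qed

lemma frontier_supporting_unit_normal:
  fixes K :: "'a::euclidean_space set"
  assumes K: "compact K" "convex K" "0 \<in> interior K" and p: "p \<in> frontier K"
  obtains N where "N \<in> sphere 0 1" "\<And>y. y \<in> K \<Longrightarrow> inner y N \<le> inner p N" "0 < inner p N"
proof -
  have "rel_interior K = interior K" using K(3) by (intro rel_interior_nonempty_interior) auto
  with p have "p \<in> closure K" "p \<notin> rel_interior K" by (simp_all add: frontier_def)
  then obtain a where a: "a \<noteq> 0" "\<And>y. y \<in> closure K \<Longrightarrow> inner a p \<le> inner a y"
    using supporting_hyperplane_relative_frontier[OF K(2)] by metis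
  define N where "N = - (a /\<^sub>R norm a)"
  have N: "N \<in> sphere 0 1" using a(1) by (simp add: N_def)
  have supp: "inner y N \<le> inner p N" if "y \<in> K" for y
    using a(2)[of y] that a(1) closure_subset[of K] by (auto simp: N_def inner_commute divide_right_mono)
  obtain e where "0 < e" "ball 0 e \<subseteq> K" using K(3) mem_interior by blast
  then have "e / 2 \<le> inner p N"
    using supp[of "(e/2) *\<^sub>R N"] N by (simp add: inner_commute power2_norm_eq_inner[symmetric] subset_iff)
  with \<open>0 < e\<close> N supp that show ?thesis by simp
qed

lemma body_pair_touching_normal:
  fixes h \<rho> :: "'a::euclidean_space \<Rightarrow> real"
  assumes "is_body_pair h \<rho>" "x \<in> sphere 0 1"
  obtains N where "N \<in> sphere 0 1" "0 < inner x N" "h N = \<rho> x * inner x N"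
proof -
  obtain K where K: "compact K" "convex K" "0 \<in> interior K"
    and eq: "\<And>y. y \<in> sphere 0 1 \<Longrightarrow> \<rho> y = radial_fun (frontier K) y \<and> h y = support_fun (frontier K) y"
    using assms(1) unfolding is_body_pair_def hypersurfaces_def by blast
  have in_K: "\<rho> y *\<^sub>R y \<in> K" and pos: "0 < \<rho> y" if "y \<in> sphere 0 1" for y
    using radial_fun_frontier[OF K that] eq[OF that]
      frontier_subset_closed[OF compact_imp_closed[OF K(1)]]
    by auto
  have "\<rho> x *\<^sub>R x \<in> frontier K" using radial_fun_frontier[OF K assms(2)] eq[OF assms(2)] by simp
  then obtain N where N: "N \<in> sphere 0 1" "\<And>y. y \<in> K \<Longrightarrow> inner y N \<le> inner (\<rho> x *\<^sub>R x) N"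
      "0 < inner (\<rho> x *\<^sub>R x) N"
    using frontier_supporting_unit_normal[OF K] by blast
  have "h N = (SUP y\<in>sphere 0 1. \<rho> y * inner y N)"
    using eq N(1) unfolding support_fun_def by (auto intro: SUP_cong)
  also have "\<dots> = \<rho> x * inner x N"
    using N(2)[OF in_K] assms(2) by (intro cSup_eq_maximum) auto
  moreover have "0 < inner x N" using N(3) pos[OF assms(2)] by (simp add: zero_less_mult_iff)
  ultimately show ?thesis using that N(1) by simp
qed

lemma body_pair_radial_eq_scale:
  fixes h1 \<rho>1 h2 \<rho>2 :: "'a::euclidean_space \<Rightarrow> real"
  assumes adm: "(h1, \<rho>1) \<in> admissible" "(h2, \<rho>2) \<in> admissible"
    and body: "is_body_pair h1 \<rho>1" "is_body_pair h2 \<rho>2"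
    and "0 < k" and h: "\<And>N. N \<in> sphere 0 1 \<Longrightarrow> h2 N = k * h1 N" and x: "x \<in> sphere 0 1"
  shows "\<rho>2 x = k * \<rho>1 x"
proof (rule antisym)
  obtain N where N: "N \<in> sphere 0 1" "0 < inner x N" "h1 N = \<rho>1 x * inner x N"
    using body_pair_touching_normal[OF body(1) x] .
  have "\<rho>2 x * inner x N \<le> k * \<rho>1 x * inner x N"
    using admissibleD(5)[OF adm(2) x N(1,2)] h[OF N(1)] N(3) by simp
  then show "\<rho>2 x \<le> k * \<rho>1 x" using N(2) by simp
next
  obtain N where N: "N \<in> sphere 0 1" "0 < inner x N" "h2 N = \<rho>2 x * inner x N"
    using body_pair_touching_normal[OF body(2) x] .
  have "k * \<rho>1 x * inner x N \<le> \<rho>2 x * inner x N"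
    using admissibleD(5)[OF adm(1) x N(1,2)] h[OF N(1)] N(3) \<open>0 < k\<close> by (simp add: mult.assoc)
  then show "k * \<rho>1 x \<le> \<rho>2 x" using N(2) by simp
qed

theorem theorem7:
  fixes \<mu> :: "'a::euclidean_space measure"
    and h1 \<rho>1 h2 \<rho>2 :: "'a \<Rightarrow> real"
  assumes dim: "DIM('a) \<ge> 2"
    and borel: "sets \<mu> = sets (restrict_space borel (sphere (0::'a) 1))"
    and total: "emeasure \<mu> (sphere 0 1) = emeasure sphere_measure (sphere (0::'a) 1)"
    and cond: "\<And>\<omega>. sph_convex \<omega> \<Longrightarrow> \<omega> \<noteq> {} \<Longrightarrow> \<omega> \<noteq> sphere 0 1 \<Longrightarrow> \<omega> \<in> sets \<mu> \<Longrightarrow>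
                 emeasure \<mu> (sphere 0 1 - \<omega>) > emeasure sphere_measure (polar_sph \<omega>)"
    and min1: "is_Q_minimizer \<mu> h1 \<rho>1" and body1: "is_body_pair h1 \<rho>1"
    and min2: "is_Q_minimizer \<mu> h2 \<rho>2" and body2: "is_body_pair h2 \<rho>2"
  shows "\<exists>c>0. \<forall>x\<in>sphere 0 1. h2 x = c * h1 x \<and> \<rho>2 x = c * \<rho>1 x"
proof -
  \<comment> \<open>Hypothesis \<open>cond\<close> (Aleksandrov's condition) only matters for existence of a minimizer.\<close>
  have fin: "finite_measure \<mu>"
    using total finite_measure.emeasure_finite[OF finite_measure_sphere_measure]
      space_eq_sphere_if_sets_eq[OF borel] by (intro finite_measureI) auto
  have tot: "measure \<mu> (sphere 0 1) = measure sphere_measure (sphere (0::'a) 1)"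
    using total by (simp add: measure_def)
  have adm: "(h1, \<rho>1) \<in> admissible" "(h2, \<rho>2) \<in> admissible"
    using min1 min2 by (auto simp: is_Q_minimizer_def)
  note f1 = admissibleD[OF adm(1)] and f2 = admissibleD[OF adm(2)]
  note tight = is_Q_minimizer_eq_sphere_support
  obtain b :: 'a where b: "b \<in> sphere 0 1" using vector_choose_size[of 1] by auto
  define k where "k = sphere_support \<rho>2 b / sphere_support \<rho>1 b"
  have "0 < k"
    using tight[OF min1 b] tight[OF min2 b] f1(3)[OF b] f2(3)[OF b] by (simp add: k_def)
  have h: "h2 N = k * h1 N" if "N \<in> sphere 0 1" for N
    using sphere_support_ratio_eq[OF dim f1(2) f2(2) f1(4) f2(4)
        is_Q_minimizer_sphere_support_min[OF fin borel tot min1 min2] b that]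
      tight[OF min1 that] tight[OF min2 that] f1(3)[OF that]
    by (simp add: k_def field_simps)
  show ?thesis
    using body_pair_radial_eq_scale[OF adm body1 body2 \<open>0 < k\<close> h] h \<open>0 < k\<close> by blast
qed

end
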